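(* Let $p$ be a prime and $\theta\in\mathbb{F}_p((X^{-1}))$. Then $$\inf_{r\geq 0,\ Q\in\mathbb{F}_p[X]\setminus\{0\}} |Q|\cdot\|X^rQ\theta\|>0$$ (i.e. $\theta$ is a counterexample to the $X$-adic Littlewood conjecture over $\mathbb{F}_p$) if and only if there is a constant $D\in\mathbb{N}_0$ such that for every $r\geq0$ the partial quotients $A^{(r)}_j$ of the simple continued fraction expansion $[A^{(r)}_1,A^{(r)}_2,\dots]$ of $\langle X^r\theta\rangle$ satisfy $\deg(A^{(r)}_j)\leq D+1$ for all $j\geq1$. Moreover, if such a $D$ exists (we then say $\theta$ has finite deficiency $D(\theta)=D$), then $$\inf_{r\geq 0,\ Q\in\mathbb{F}_p[X]\setminus\{0\}} |Q|\cdot\|X^rQ\theta\|\geq 2^{-(D+1)}.$$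
   Context: $\mathbb{F}_p((X^{-1}))$ is the field of formal Laurent series $\theta=\sum_{i=j}^\infty a_iX^{-i}$ over $\mathbb{F}_p$ ($a_j\ne0$), with $\deg(\theta)=-j$, $|\theta|=2^{-j}$ ($|0|=0$), fractional part $\langle\theta\rangle=\sum_{i\ge\max\{1,j\}}a_iX^{-i}$, and $\|\theta\|=|\langle\theta\rangle|$. For a Laurent series $\eta$ with $\langle\eta\rangle=\eta$, its simple continued fraction expansion $\eta=[A_1,A_2,\dots]$ (i.e. $[0;A_1,A_2,\dots]$) has polynomial partial quotients $A_i\in\mathbb{F}_p[X]$ of degree $\ge1$; convergents $P_h/Q_h=[0;A_1,\dots,A_h]$ have $\deg Q_h=\sum_{i=1}^h\deg A_i$. *)

theory Defs
  imports "HOL-Computational_Algebra.Formal_Laurent_Series" "HOL-Computational_Algebra.Primes" Complex_Main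
begin

text \<open>Encoding: a Laurent series theta = sum_i a_i X^(-i) in F_p((X^-1)) is represented
  as an element of 'a fls (formal Laurent series in the variable t = X^(-1)),
  with coefficient a_i stored at index i, i.e. fls_nth theta i = a_i.
  Hence deg theta = - fls_subdegree theta.\<close>

definition poly_fls :: "'a::field poly \<Rightarrow> 'a fls" where
  "poly_fls Q = (\<Sum>k\<le>degree Q. fls_const (coeff Q k) * fls_X_intpow (- int k))"

definition Xpow :: "nat \<Rightarrow> 'a::field fls" where
  "Xpow r = fls_X_intpow (- int r)"

text \<open>Polynomial (integral) part: the terms a_i X^(-i) with i \<le> 0, as a polynomial in X.\<close>
definition int_poly :: "'a::field fls \<Rightarrow> 'a poly" where
  "int_poly \<theta> = fls_prpart \<theta> + [:(fls_nth \<theta> 0):]"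

definition frac_part :: "'a::field fls \<Rightarrow> 'a fls" where
  "frac_part \<theta> = \<theta> - poly_fls (int_poly \<theta>)"

definition abs_L :: "'a::field fls \<Rightarrow> real" where
  "abs_L \<theta> = (if \<theta> = 0 then 0 else 2 powr (- real_of_int (fls_subdegree \<theta>)))"

definition dist_poly :: "'a::field fls \<Rightarrow> real" where
  "dist_poly \<theta> = abs_L (frac_part \<theta>)"

primrec cf_rem :: "'a::field fls \<Rightarrow> nat \<Rightarrow> 'a fls" where
  "cf_rem \<eta> 0 = \<eta>"
| "cf_rem \<eta> (Suc n) = frac_part (inverse (cf_rem \<eta> n))"

text \<open>j-th partial quotient A_j (j \<ge> 1) = polynomial part of 1/eta_(j-1);
  it exists iff eta_(j-1) \<noteq> 0.\<close>
definition partial_quotient :: "'a::field fls \<Rightarrow> nat \<Rightarrow> 'a poly" where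
  "partial_quotient \<eta> j = int_poly (inverse (cf_rem \<eta> (j - 1)))"

text \<open>Bounded partial quotients with bound D+1 for all shifts <X^r theta>.
  A terminated expansion (eta_(j-1) = 0) counts as an infinite partial quotient
  (degree infinity), so it violates the bound.\<close>
definition bounded_deficiency :: "'a::field fls \<Rightarrow> nat \<Rightarrow> bool" where
  "bounded_deficiency \<theta> D \<longleftrightarrow>
     (\<forall>r::nat. \<forall>j::nat. j \<ge> 1 \<longrightarrow>
        cf_rem (frac_part (Xpow r * \<theta>)) (j - 1) \<noteq> 0 \<and>
        degree (partial_quotient (frac_part (Xpow r * \<theta>)) j) \<le> D + 1)"

definition xadic_inf :: "'a::field fls \<Rightarrow> real" where
  "xadic_inf \<theta> = (INF rQ \<in> {(r::nat, Q::'a poly). Q \<noteq> 0}.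
      abs_L (poly_fls (snd rQ)) * dist_poly (Xpow (fst rQ) * poly_fls (snd rQ) * \<theta>))"

end

theory Submission
  imports Defs
begin

text \<open>
  For \<open>|\<eta>| < 1\<close> let \<open>\<eta>\<^sub>0 = \<eta>\<close> and \<open>\<eta>\<^sub>j\<^sub>+\<^sub>1 = \<langle>1/\<eta>\<^sub>j\<rangle>\<close> be the continued fraction remainders,
  so that \<open>|\<eta>\<^sub>j| = 2^(-deg A\<^sub>j\<^sub>+\<^sub>1)\<close>. The infimum of the quality \<open>|Q|\<cdot>\<parallel>Q\<eta>\<parallel>\<close> over nonzero
  polynomials \<open>Q\<close> is \<open>inf\<^sub>j |\<eta>\<^sub>j|\<close>, and both inequalities come from comparing \<open>\<eta>\<close> with \<open>\<eta>\<^sub>1\<close>.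
  If \<open>Q\<eta> = P + e\<close> with \<open>P\<close> a polynomial and \<open>|e| < |\<eta>|\<close>, then \<open>\<langle>P\<eta>\<^sub>1\<rangle> = -e/\<eta>\<close>, so \<open>P\<close> has the
  same quality for \<open>\<eta>\<^sub>1\<close> as \<open>Q\<close> for \<open>\<eta>\<close> but smaller degree; induction on the degree gives the
  lower bound. Conversely every \<open>Q'\<close> for \<open>\<eta>\<^sub>1\<close> lifts to a \<open>Q\<close> for \<open>\<eta>\<close> of the same quality, and
  induction on \<open>j\<close> starting from \<open>Q = 1\<close> gives the upper bound. Since
  \<open>\<parallel>X\<^sup>rQ\<theta>\<parallel> = \<parallel>Q\<langle>X\<^sup>r\<theta>\<rangle>\<parallel>\<close>, the \<open>X\<close>-adic infimum is the infimum of the \<open>|\<eta>\<^sub>j|\<close> over the expansions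
  of all \<open>\<langle>X\<^sup>r\<theta>\<rangle>\<close>. The argument works over any field.
\<close>

unbundle fps_syntax

section \<open>Polynomials among Laurent series\<close>

definition is_poly_fls :: "'a::field fls \<Rightarrow> bool" where
  "is_poly_fls x \<longleftrightarrow> (\<forall>i>0. x $$ i = 0)"

lemma poly_fls_nth: "poly_fls Q $$ i = (if i \<le> 0 then coeff Q (nat (- i)) else 0)"
proof -
  have "poly_fls Q $$ i = (\<Sum>k\<le>degree Q. if k = nat (- i) \<and> i \<le> 0 then coeff Q k else 0)"
    unfolding poly_fls_def fls_nth_sum by (intro sum.cong) auto
  also have "\<dots> = (if i \<le> 0 then coeff Q (nat (- i)) else 0)"
    by (auto simp: coeff_eq_0)
  finally show ?thesis .
qed

lemma coeff_int_poly: "coeff (int_poly x) n = x $$ (- int n)"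
  unfolding int_poly_def by (simp add: coeff_pCons split: nat.splits)

lemma frac_part_nth: "frac_part x $$ i = (if i \<le> 0 then 0 else x $$ i)"
  unfolding frac_part_def by (simp add: poly_fls_nth coeff_int_poly)

lemma poly_fls_0 [simp]: "poly_fls 0 = 0"
  by (rule fls_eqI) (simp add: poly_fls_nth)

lemma poly_fls_1 [simp]: "poly_fls 1 = 1"
  by (rule fls_eqI) (simp add: poly_fls_nth)

lemma poly_fls_eq_0_iff [simp]: "poly_fls Q = 0 \<longleftrightarrow> Q = 0"
proof
  assume "poly_fls Q = 0"
  then have "poly_fls Q $$ (- int n) = 0" for n by simp
  then show "Q = 0" by (intro poly_eqI) (simp add: poly_fls_nth)
qed simp

lemma fls_subdegree_poly_fls: "Q \<noteq> 0 \<Longrightarrow> fls_subdegree (poly_fls Q) = - int (degree Q)"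
  by (rule fls_subdegree_eqI) (auto simp: poly_fls_nth coeff_eq_0)

lemma is_poly_fls_poly_fls: "is_poly_fls (poly_fls Q)"
  unfolding is_poly_fls_def by (simp add: poly_fls_nth)

lemma is_poly_fls_diff_frac_part: "is_poly_fls (x - frac_part x)"
  unfolding is_poly_fls_def by (simp add: frac_part_nth)

lemma is_poly_fls_add: "is_poly_fls x \<Longrightarrow> is_poly_fls y \<Longrightarrow> is_poly_fls (x + y)"
  unfolding is_poly_fls_def by simp

lemma is_poly_fls_diff: "is_poly_fls x \<Longrightarrow> is_poly_fls y \<Longrightarrow> is_poly_fls (x - y)"
  unfolding is_poly_fls_def by simp

lemma is_poly_fls_mult:
  assumes "is_poly_fls x" "is_poly_fls y"
  shows "is_poly_fls (x * y)"
  unfolding is_poly_fls_def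
proof (intro allI impI)
  fix n :: int assume "n > 0"
  have vanish: "x $$ i * y $$ (n - i) = 0" for i
    using assms \<open>n > 0\<close> unfolding is_poly_fls_def by (cases "i > 0") auto
  show "(x * y) $$ n = 0"
    unfolding fls_times_nth(2) by (rule sum.neutral) (blast intro: vanish)
qed

lemma poly_fls_int_poly: "is_poly_fls x \<Longrightarrow> poly_fls (int_poly x) = x"
  by (rule fls_eqI) (auto simp: poly_fls_nth coeff_int_poly is_poly_fls_def)

lemma frac_part_add_poly: "is_poly_fls y \<Longrightarrow> frac_part (x + y) = frac_part x"
  by (rule fls_eqI) (auto simp: frac_part_nth is_poly_fls_def)

lemma is_poly_fls_mult_diff_frac_part:
  assumes "is_poly_fls x"
  shows "is_poly_fls (x * y - frac_part (x * frac_part y))"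
proof -
  have split: "x * y - frac_part (x * frac_part y) =
      x * (y - frac_part y) + (x * frac_part y - frac_part (x * frac_part y))"
    by (simp add: algebra_simps)
  show ?thesis
    unfolding split by (intro is_poly_fls_add is_poly_fls_mult assms is_poly_fls_diff_frac_part)
qed

section \<open>The absolute value\<close>

lemma abs_L_nonneg: "abs_L x \<ge> 0"
  unfolding abs_L_def by simp

lemma abs_L_pos: "x \<noteq> 0 \<Longrightarrow> abs_L x > 0"
  unfolding abs_L_def by simp

lemma abs_L_0 [simp]: "abs_L 0 = 0"
  unfolding abs_L_def by simp

lemma abs_L_1 [simp]: "abs_L 1 = 1"
  unfolding abs_L_def by simp

lemma abs_L_mult: "abs_L (x * y) = abs_L x * abs_L y"
  unfolding abs_L_def by (simp add: powr_add[symmetric] algebra_simps)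

lemma abs_L_inverse: "abs_L (inverse x) = inverse (abs_L x)"
  unfolding abs_L_def by (simp add: powr_minus)

lemma abs_L_divide: "abs_L (x / y) = abs_L x / abs_L y"
  by (simp add: divide_inverse abs_L_mult abs_L_inverse)

lemma abs_L_uminus: "abs_L (- x) = abs_L x"
  unfolding abs_L_def by simp

lemma abs_L_less_1_iff: "abs_L x < 1 \<longleftrightarrow> x = 0 \<or> fls_subdegree x \<ge> 1"
  using powr_less_cancel_iff[of 2 "- real_of_int (fls_subdegree x)" 0]
  unfolding abs_L_def by auto

lemma abs_L_frac_part_less_1: "abs_L (frac_part x) < 1"
proof (cases "frac_part x = 0")
  case False
  then have "frac_part x $$ fls_subdegree (frac_part x) \<noteq> 0" by simp
  then show ?thesis by (auto simp: abs_L_less_1_iff frac_part_nth split: if_splits)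
qed simp

lemma abs_L_poly_fls: "Q \<noteq> 0 \<Longrightarrow> abs_L (poly_fls Q) = 2 ^ degree Q"
  by (simp add: abs_L_def fls_subdegree_poly_fls powr_realpow)

lemma abs_L_add_eq:
  assumes "abs_L y < abs_L x"
  shows "abs_L (x + y) = abs_L x"
proof (cases "y = 0")
  case False
  have "x \<noteq> 0" using assms abs_L_nonneg[of y] by auto
  then have "fls_subdegree x < fls_subdegree y" using assms False by (simp add: abs_L_def)
  then have "fls_subdegree (x + y) = fls_subdegree x" by (rule fls_subdegree_add_eq1[OF \<open>x \<noteq> 0\<close>])
  moreover have "x + y \<noteq> 0"
  proof
    assume "x + y = 0"
    then have "y = - x" by (simp add: eq_neg_iff_add_eq_0 add.commute)
    then show False using assms by (simp add: abs_L_uminus)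
  qed
  ultimately show ?thesis using \<open>x \<noteq> 0\<close> by (simp add: abs_L_def)
qed simp

lemma abs_L_diff_eq: "abs_L y < abs_L x \<Longrightarrow> abs_L (x - y) = abs_L x"
  using abs_L_add_eq[of "- y" x] by (simp add: abs_L_uminus)

lemma frac_part_eq_self: "abs_L x < 1 \<Longrightarrow> frac_part x = x"
  by (rule fls_eqI) (auto simp: frac_part_nth abs_L_less_1_iff)

lemma frac_part_eqI:
  assumes "is_poly_fls P" "abs_L (x - P) < 1"
  shows "frac_part x = x - P"
proof -
  have "frac_part x = frac_part ((x - P) + P)" by simp
  also have "\<dots> = frac_part (x - P)" by (rule frac_part_add_poly[OF assms(1)])
  also have "\<dots> = x - P" by (rule frac_part_eq_self[OF assms(2)])
  finally show ?thesis .
qed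

lemma dist_poly_nonneg: "dist_poly x \<ge> 0"
  unfolding dist_poly_def by (rule abs_L_nonneg)

lemma dist_poly_mult_Xpow:
  "dist_poly (Xpow r * poly_fls Q * \<theta>) = dist_poly (poly_fls Q * frac_part (Xpow r * \<theta>))"
proof -
  define y where "y = Xpow r * \<theta>"
  have "Xpow r * poly_fls Q * \<theta> = poly_fls Q * frac_part y + poly_fls Q * (y - frac_part y)"
    unfolding y_def by (simp add: algebra_simps)
  moreover have "is_poly_fls (poly_fls Q * (y - frac_part y))"
    by (intro is_poly_fls_mult is_poly_fls_poly_fls is_poly_fls_diff_frac_part)
  ultimately show ?thesis unfolding dist_poly_def y_def by (simp add: frac_part_add_poly)
qed

section \<open>Continued fraction remainders\<close>

lemma cf_rem_frac_part_inverse: "cf_rem (frac_part (inverse \<eta>)) n = cf_rem \<eta> (Suc n)"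
  by (induction n) auto

lemma abs_L_cf_rem_less_1: "abs_L \<eta> < 1 \<Longrightarrow> abs_L (cf_rem \<eta> n) < 1"
  by (cases n) (auto simp: abs_L_frac_part_less_1)

lemma abs_L_eq_partial_quotient:
  assumes "abs_L \<eta> < 1" "\<eta> \<noteq> 0"
  shows "abs_L \<eta> = 2 powr - real (degree (partial_quotient \<eta> 1))"
proof -
  define y where "y = inverse \<eta>"
  have "abs_L y > 1"
    using assms by (simp add: y_def abs_L_inverse one_less_inverse abs_L_pos)
  moreover have "poly_fls (int_poly y) = y - frac_part y"
    unfolding frac_part_def by simp
  ultimately have "abs_L (poly_fls (int_poly y)) = abs_L y"
    using abs_L_diff_eq[of "frac_part y" y] abs_L_frac_part_less_1[of y] by simp
  with \<open>abs_L y > 1\<close> have "int_poly y \<noteq> 0"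
    by auto
  with \<open>abs_L (poly_fls (int_poly y)) = abs_L y\<close> have "abs_L y = 2 ^ degree (int_poly y)"
    by (simp add: abs_L_poly_fls)
  moreover have "abs_L \<eta> = inverse (abs_L y)"
    by (simp add: y_def abs_L_inverse)
  ultimately show ?thesis
    by (simp add: y_def partial_quotient_def powr_minus powr_realpow)
qed

lemma frac_part_mult_frac_part_inverse:
  assumes "\<eta> \<noteq> 0" "is_poly_fls q" "is_poly_fls p" "q * \<eta> = p + e" "abs_L e < abs_L \<eta>"
  shows "frac_part (p * frac_part (inverse \<eta>)) = - (e * inverse \<eta>)"
proof -
  define a where "a = inverse \<eta> - frac_part (inverse \<eta>)"
  have p: "p = q * \<eta> - e"
    using assms(4) by simp
  have "p * frac_part (inverse \<eta>) - (q - p * a) = - (e * inverse \<eta>)"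
    using assms(1) unfolding a_def p by (simp add: algebra_simps)
  moreover have "is_poly_fls (q - p * a)"
    unfolding a_def by (intro is_poly_fls_diff is_poly_fls_mult assms(2,3) is_poly_fls_diff_frac_part)
  moreover have "abs_L (- (e * inverse \<eta>)) < 1"
    using assms(5) abs_L_pos[OF assms(1)] by (simp add: abs_L_uminus abs_L_divide field_simps)
  ultimately show ?thesis
    using frac_part_eqI[of "q - p * a" "p * frac_part (inverse \<eta>)"] by simp
qed

section \<open>Approximation quality\<close>

definition approx_quality :: "'a::field poly \<Rightarrow> 'a fls \<Rightarrow> real" where
  "approx_quality Q \<eta> = abs_L (poly_fls Q) * dist_poly (poly_fls Q * \<eta>)"

lemma approx_quality_nonneg: "approx_quality Q \<eta> \<ge> 0"
  unfolding approx_quality_def by (intro mult_nonneg_nonneg abs_L_nonneg dist_poly_nonneg)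

lemma approx_quality_1: "abs_L \<eta> < 1 \<Longrightarrow> approx_quality 1 \<eta> = abs_L \<eta>"
  by (simp add: approx_quality_def dist_poly_def frac_part_eq_self)

lemma approx_quality_descent:
  assumes "\<eta> \<noteq> 0" "abs_L \<eta> < 1" "Q \<noteq> 0" "approx_quality Q \<eta> < abs_L \<eta>"
  obtains P where "P \<noteq> 0" "degree P < degree Q"
    "approx_quality P (frac_part (inverse \<eta>)) = approx_quality Q \<eta>"
proof -
  define q where "q = poly_fls Q"
  define e where "e = frac_part (q * \<eta>)"
  define p where "p = q * \<eta> - e"
  have abs_q: "abs_L q = 2 ^ degree Q" "abs_L q \<ge> 1"
    using assms(3) by (simp_all add: q_def abs_L_poly_fls)
  have abs_\<eta>: "abs_L \<eta> > 0"
    using assms(1) by (rule abs_L_pos)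
  have quality: "approx_quality Q \<eta> = abs_L q * abs_L e"
    unfolding approx_quality_def dist_poly_def q_def e_def ..
  have "abs_L e \<le> approx_quality Q \<eta>"
    unfolding quality using abs_q(2) abs_L_nonneg[of e] by (simp add: mult_le_cancel_right1)
  with assms(4) have small_e: "abs_L e < abs_L \<eta>" by linarith
  also have "\<dots> \<le> abs_L (q * \<eta>)"
    using abs_q(2) abs_\<eta> by (simp add: abs_L_mult)
  finally have abs_p: "abs_L p = abs_L q * abs_L \<eta>"
    unfolding p_def by (simp add: abs_L_diff_eq abs_L_mult)
  have "is_poly_fls p"
    unfolding p_def e_def by (rule is_poly_fls_diff_frac_part)
  define P where "P = int_poly p"
  have P: "poly_fls P = p"
    unfolding P_def using \<open>is_poly_fls p\<close> by (rule poly_fls_int_poly)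
  have "P \<noteq> 0"
    using abs_p abs_q abs_\<eta> P by auto
  have "abs_L p < abs_L q"
    using abs_p abs_q assms(2) abs_\<eta> by simp
  then have "degree P < degree Q"
    using abs_q(1) abs_L_poly_fls[OF \<open>P \<noteq> 0\<close>] P by simp
  have "frac_part (p * frac_part (inverse \<eta>)) = - (e * inverse \<eta>)"
    by (rule frac_part_mult_frac_part_inverse[OF assms(1) is_poly_fls_poly_fls[of Q] \<open>is_poly_fls p\<close> _ small_e])
      (simp add: p_def q_def)
  then have "approx_quality P (frac_part (inverse \<eta>)) = abs_L p * (abs_L e / abs_L \<eta>)"
    unfolding approx_quality_def dist_poly_def P
    by (simp add: abs_L_uminus abs_L_mult abs_L_inverse divide_inverse)
  also have "\<dots> = approx_quality Q \<eta>"
    using abs_\<eta> assms(1) by (simp add: quality abs_p)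
  finally show ?thesis
    using that \<open>P \<noteq> 0\<close> \<open>degree P < degree Q\<close> by blast
qed

lemma approx_quality_ascent:
  assumes "\<eta> \<noteq> 0" "abs_L \<eta> < 1" "Q' \<noteq> 0"
  obtains Q where "Q \<noteq> 0" "approx_quality Q \<eta> = approx_quality Q' (frac_part (inverse \<eta>))"
proof -
  define q' where "q' = poly_fls Q'"
  define e' where "e' = frac_part (q' * frac_part (inverse \<eta>))"
  define q where "q = q' * inverse \<eta> - e'"
  have abs_\<eta>: "abs_L \<eta> > 0"
    using assms(1) by (rule abs_L_pos)
  have "abs_L q' \<ge> 1"
    using assms(3) by (simp add: q'_def abs_L_poly_fls)
  have abs_e': "abs_L e' < 1"
    unfolding e'_def by (rule abs_L_frac_part_less_1)
  have "1 < abs_L q' / abs_L \<eta>"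
    using \<open>abs_L q' \<ge> 1\<close> assms(2) abs_\<eta> by (simp add: less_divide_eq)
  then have abs_q: "abs_L q = abs_L q' / abs_L \<eta>"
    using abs_e' abs_L_diff_eq[of e' "q' * inverse \<eta>"]
    by (simp add: q_def abs_L_mult abs_L_inverse divide_inverse)
  have "q * \<eta> - q' = - (e' * \<eta>)"
    using assms(1) by (simp add: q_def algebra_simps)
  moreover have "abs_L e' * abs_L \<eta> \<le> 1 * abs_L \<eta>"
    using abs_e' abs_\<eta> by (intro mult_right_mono) simp_all
  then have "abs_L (e' * \<eta>) < 1"
    using assms(2) by (simp add: abs_L_mult)
  ultimately have frac: "frac_part (q * \<eta>) = - (e' * \<eta>)"
    using frac_part_eqI[OF is_poly_fls_poly_fls[of Q'], of "q * \<eta>"]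
    by (simp add: q'_def abs_L_uminus)
  define Q where "Q = int_poly q"
  have Q: "poly_fls Q = q"
    unfolding Q_def q_def e'_def q'_def
    by (intro poly_fls_int_poly is_poly_fls_mult_diff_frac_part is_poly_fls_poly_fls)
  have "Q \<noteq> 0"
    using Q abs_q \<open>abs_L q' \<ge> 1\<close> abs_\<eta> by auto
  moreover have "approx_quality Q \<eta> = approx_quality Q' (frac_part (inverse \<eta>))"
    unfolding approx_quality_def dist_poly_def Q frac abs_q
    using abs_\<eta> assms(1) by (simp add: q'_def e'_def abs_L_uminus abs_L_mult)
  ultimately show ?thesis
    using that by blast
qed

lemma approx_quality_ge_if_abs_cf_rem_ge:
  assumes "abs_L \<eta> < 1" "\<forall>j. cf_rem \<eta> j \<noteq> 0 \<and> c \<le> abs_L (cf_rem \<eta> j)" "Q \<noteq> 0"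
  shows "c \<le> approx_quality Q \<eta>"
  using assms
proof (induction "degree Q" arbitrary: Q \<eta> rule: less_induct)
  case less
  have "\<eta> \<noteq> 0" "c \<le> abs_L \<eta>"
    using less.prems(2)[rule_format, of 0] by auto
  show ?case
  proof (rule ccontr)
    assume "\<not> c \<le> approx_quality Q \<eta>"
    with \<open>c \<le> abs_L \<eta>\<close> have "approx_quality Q \<eta> < abs_L \<eta>" by linarith
    then obtain P where "P \<noteq> 0" "degree P < degree Q"
      and P: "approx_quality P (frac_part (inverse \<eta>)) = approx_quality Q \<eta>"
      by (rule approx_quality_descent[OF \<open>\<eta> \<noteq> 0\<close> less.prems(1) less.prems(3)])
    have "\<forall>j. cf_rem (frac_part (inverse \<eta>)) j \<noteq> 0 \<and> c \<le> abs_L (cf_rem (frac_part (inverse \<eta>)) j)"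
      using less.prems(2) unfolding cf_rem_frac_part_inverse by blast
    then have "c \<le> approx_quality P (frac_part (inverse \<eta>))"
      by (rule less.hyps[OF \<open>degree P < degree Q\<close> abs_L_frac_part_less_1 _ \<open>P \<noteq> 0\<close>])
    with P \<open>\<not> c \<le> approx_quality Q \<eta>\<close> show False by simp
  qed
qed

lemma approx_quality_le_abs_cf_rem:
  assumes "abs_L \<eta> < 1"
  shows "\<exists>Q. Q \<noteq> 0 \<and> approx_quality Q \<eta> \<le> abs_L (cf_rem \<eta> n)"
  using assms
proof (induction n arbitrary: \<eta>)
  case 0
  then have "approx_quality 1 \<eta> = abs_L \<eta>"
    by (rule approx_quality_1)
  then show ?case
    by (intro exI[of _ 1]) simp
next
  case (Suc n)
  show ?case
  proof (cases "\<eta> = 0")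
    case True
    then have "approx_quality 1 \<eta> \<le> abs_L (cf_rem \<eta> (Suc n))"
      using approx_quality_1[OF Suc.prems] abs_L_nonneg[of "cf_rem \<eta> (Suc n)"] by simp
    then show ?thesis
      by (intro exI[of _ 1]) simp
  next
    case False
    obtain Q' where "Q' \<noteq> 0"
      and Q': "approx_quality Q' (frac_part (inverse \<eta>)) \<le> abs_L (cf_rem \<eta> (Suc n))"
      using Suc.IH[OF abs_L_frac_part_less_1[of "inverse \<eta>"]]
      unfolding cf_rem_frac_part_inverse by blast
    obtain Q where "Q \<noteq> 0" "approx_quality Q \<eta> = approx_quality Q' (frac_part (inverse \<eta>))"
      using approx_quality_ascent[OF False Suc.prems \<open>Q' \<noteq> 0\<close>] .
    with Q' show ?thesis
      by (intro exI[of _ Q]) simp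
  qed
qed

section \<open>The \<open>X\<close>-adic infimum\<close>

lemma xadic_inf_eq:
  "xadic_inf \<theta> = (INF (r, Q) \<in> {(r, Q). Q \<noteq> 0}. approx_quality Q (frac_part (Xpow r * \<theta>)))"
  unfolding xadic_inf_def approx_quality_def by (simp add: dist_poly_mult_Xpow case_prod_unfold)

lemma xadic_inf_ge_if_abs_cf_rem_ge:
  assumes "\<forall>r j. cf_rem (frac_part (Xpow r * \<theta>)) j \<noteq> 0 \<and> c \<le> abs_L (cf_rem (frac_part (Xpow r * \<theta>)) j)"
  shows "c \<le> xadic_inf \<theta>"
  unfolding xadic_inf_eq
proof (rule cINF_greatest)
  show "{(r, Q). Q \<noteq> (0::'a poly)} \<noteq> {}"
    by (auto intro: exI[of _ 1])
qed (use assms in \<open>auto intro!: approx_quality_ge_if_abs_cf_rem_ge abs_L_frac_part_less_1\<close>)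

lemma xadic_inf_le_abs_cf_rem: "xadic_inf \<theta> \<le> abs_L (cf_rem (frac_part (Xpow r * \<theta>)) j)"
proof -
  obtain Q where "Q \<noteq> 0"
    and Q: "approx_quality Q (frac_part (Xpow r * \<theta>)) \<le> abs_L (cf_rem (frac_part (Xpow r * \<theta>)) j)"
    using approx_quality_le_abs_cf_rem abs_L_frac_part_less_1 by blast
  have "xadic_inf \<theta> \<le> approx_quality Q (frac_part (Xpow r * \<theta>))"
    unfolding xadic_inf_eq
    by (rule cINF_lower2[where x = "(r, Q)"]) (use \<open>Q \<noteq> 0\<close> in \<open>auto intro: bdd_belowI2 approx_quality_nonneg\<close>)
  with Q show ?thesis by linarith
qed

lemma degree_partial_quotient_le_iff:
  assumes "abs_L \<eta> < 1"
  shows "cf_rem \<eta> j \<noteq> 0 \<and> degree (partial_quotient \<eta> (Suc j)) \<le> D + 1 \<longleftrightarrow>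
    cf_rem \<eta> j \<noteq> 0 \<and> 2 powr - real (D + 1) \<le> abs_L (cf_rem \<eta> j)"
proof (cases "cf_rem \<eta> j = 0")
  case False
  then show ?thesis
    using abs_L_eq_partial_quotient[OF abs_L_cf_rem_less_1[OF assms] False]
    by (simp add: partial_quotient_def) linarith
qed simp

lemma bounded_deficiency_iff_abs_cf_rem:
  "bounded_deficiency \<theta> D \<longleftrightarrow>
    (\<forall>r j. cf_rem (frac_part (Xpow r * \<theta>)) j \<noteq> 0 \<and>
       2 powr - real (D + 1) \<le> abs_L (cf_rem (frac_part (Xpow r * \<theta>)) j))"
proof -
  have shift: "(\<forall>j::nat. 1 \<le> j \<longrightarrow> P j) \<longleftrightarrow> (\<forall>j. P (Suc j))" for P
    by (auto simp: Suc_le_eq dest!: gr0_implies_Suc)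
  show ?thesis
    unfolding bounded_deficiency_def shift diff_Suc_1
    by (simp only: degree_partial_quotient_le_iff[OF abs_L_frac_part_less_1])
qed

lemma bounded_deficiency_if_xadic_inf_gt:
  assumes "2 powr - real (D + 1) < xadic_inf \<theta>"
  shows "bounded_deficiency \<theta> D"
  unfolding bounded_deficiency_iff_abs_cf_rem
proof (intro allI conjI)
  fix r j
  have "2 powr - real (D + 1) < abs_L (cf_rem (frac_part (Xpow r * \<theta>)) j)"
    using assms xadic_inf_le_abs_cf_rem[of \<theta> r j] by linarith
  then show "cf_rem (frac_part (Xpow r * \<theta>)) j \<noteq> 0"
    "2 powr - real (D + 1) \<le> abs_L (cf_rem (frac_part (Xpow r * \<theta>)) j)"
    using powr_ge_zero[of 2 "- real (D + 1)"] by force+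
qed

theorem lemma3:
  fixes \<theta> :: "'a::{field, finite} fls"
  assumes "prime (card (UNIV :: 'a set))"
  shows "(xadic_inf \<theta> > 0 \<longleftrightarrow> (\<exists>D::nat. bounded_deficiency \<theta> D))
       \<and> (\<forall>D::nat. bounded_deficiency \<theta> D \<longrightarrow> xadic_inf \<theta> \<ge> 2 powr (- real (D + 1)))"
proof -
  have lower: "2 powr - real (D + 1) \<le> xadic_inf \<theta>" if "bounded_deficiency \<theta> D" for D
    using that by (intro xadic_inf_ge_if_abs_cf_rem_ge) (simp add: bounded_deficiency_iff_abs_cf_rem)
  moreover have "\<exists>D. bounded_deficiency \<theta> D" if pos: "xadic_inf \<theta> > 0"
  proof -
    obtain D where "(1 / 2 :: real) ^ D < xadic_inf \<theta>"
      using real_arch_pow_inv[OF pos, of "1 / 2"] by auto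
    moreover have "(1 / 2 :: real) ^ D = 2 powr - real D"
      by (simp add: powr_minus powr_realpow power_divide inverse_eq_divide)
    moreover have "2 powr - real (D + 1) < (2::real) powr - real D"
      by simp
    ultimately have "2 powr - real (D + 1) < xadic_inf \<theta>"
      by linarith
    then show ?thesis
      using bounded_deficiency_if_xadic_inf_gt by blast
  qed
  moreover have "0 < xadic_inf \<theta>" if "bounded_deficiency \<theta> D" for D
    using lower[OF that] by (rule less_le_trans[rotated]) simp
  ultimately show ?thesis
    by blast
qed

end
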